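(* Let $m>n>0$ and $c>0$ be constants. Let $f,g\in C(\mathbb{R}_0^+,\mathbb{R}_0^+)$, let $w\in C(\mathbb{R}_0^+,\mathbb{R}_0^+)$ be nondecreasing with $w(x)>0$ for $x>0$, and let $\alpha\in C^1(\mathbb{R}_0^+,\mathbb{R}_0^+)$ be nondecreasing with $\alpha(t)\le t$. If $u\in C(\mathbb{R}_0^+,\mathbb{R}_0^+)$ satisfies $$u^m(t)\le c^{m/(m-n)}+\frac{m}{m-n}\int_0^{\alpha(t)}\big[f(s)u^n(s)w(u(s))+g(s)u^n(s)\big]\,ds\qquad\text{for all }t\ge0,$$ then there exists $\tau>0$ such that for all $t\in[0,\tau]$, $$\Psi\Big(c+\int_0^{\alpha(t)}g(s)\,ds\Big)+\int_0^{\alpha(t)}f(s)\,ds\in\mathrm{Dom}(\Psi^{-1})$$ and $$u(t)\le\Big\{\Psi^{-1}\Big[\Psi\Big(c+\int_0^{\alpha(t)}g(s)\,ds\Big)+\int_0^{\alpha(t)}f(s)\,ds\Big]\Big\}^{1/(m-n)},$$ where $\Psi(x)=\int_1^x\frac{ds}{w(s^{1/(m-n)})}$ for $x>0$.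
   Context: $\mathbb{R}_0^+=[0,\infty)$. $\Psi$ is strictly increasing on $(0,\infty)$, $\Psi^{-1}$ denotes its inverse, and $\mathrm{Dom}(\Psi^{-1})=\Psi((0,\infty))$. *)

theory Defs
  imports "HOL-Analysis.Analysis"
begin

definition oint :: "real \<Rightarrow> real \<Rightarrow> (real \<Rightarrow> real) \<Rightarrow> real" where
  "oint a b h = (if a \<le> b then integral {a..b} h else - integral {b..a} h)"

definition Psi :: "(real \<Rightarrow> real) \<Rightarrow> real \<Rightarrow> real \<Rightarrow> real \<Rightarrow> real" where
  "Psi w m n x = oint 1 x (\<lambda>s. 1 / w (s powr (1 / (m - n))))"

definition Psi_inv :: "(real \<Rightarrow> real) \<Rightarrow> real \<Rightarrow> real \<Rightarrow> real \<Rightarrow> real" where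
  "Psi_inv w m n y = (THE x. x > 0 \<and> Psi w m n x = y)"

definition Psi_dom :: "(real \<Rightarrow> real) \<Rightarrow> real \<Rightarrow> real \<Rightarrow> real set" where
  "Psi_dom w m n = Psi w m n ` {0<..}"

end

theory Submission
  imports Defs
begin

(* Write v(s) for the right-hand side with upper limit s (the "majorant"), so that
   u(t)^m <= v(alpha t) <= v(t) because alpha(t) <= t and the integrand h is nonnegative.
   (1) Power reduction: v' = m/(m-n) h and h <= v^(n/m) (f w(v^(1/m)) + g), so the power
       P = v^((m-n)/m) satisfies P' <= f w(v^(1/m)) + g and hence P <= c + G + K,
       where G = int g and K = int f w(v^(1/m)).
   (2) Bihari step: for fixed T the function R = c + G(T) + K dominates P on [0,T], so
       w(v^(1/m)) = w(P^(1/(m-n))) <= w(R^(1/(m-n))) and (Psi o R)' <= f; integrating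
       gives Psi(P(T)) <= Psi(c + G(T)) + F(T) with F = int f.
   (3) H(T) = Psi(c + G(T)) + F(T) is continuous with H(0) = Psi(c), so for small T it lies
       in [Psi(c), Psi(2c)], inside the range of the strictly increasing Psi; applying the
       inverse to (2) at T = alpha(t) gives the claimed bound on u(t). *)

lemma integral_upper_has_derivative:
  fixes h :: "real \<Rightarrow> real"
  assumes "continuous_on {a..b} h" "a < x" "x < b"
  shows "((\<lambda>y. integral {a..y} h) has_real_derivative h x) (at x)"
  using integral_has_real_derivative[of a b h x] assms by (simp add: at_within_Icc_at)

lemma integral_nonneg_continuous:
  fixes h :: "real \<Rightarrow> real"
  assumes "continuous_on {a..b} h" "\<forall>s\<in>{a..b}. h s \<ge> 0"
  shows "0 \<le> integral {a..b} h"
  using assms by (intro integral_nonneg integrable_continuous_real) auto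

lemma integral_upper_mono:
  fixes h :: "real \<Rightarrow> real"
  assumes h: "continuous_on {0..} h" "\<forall>s\<ge>0. h s \<ge> 0" and ab: "0 \<le> a" "a \<le> b"
  shows "integral {0..a} h \<le> integral {0..b} h"
proof -
  have "0 \<le> integral {a..b} h"
    using h ab by (intro integral_nonneg_continuous continuous_on_subset[OF h(1)]) auto
  moreover have "h integrable_on {0..b}"
    by (rule integrable_continuous_real, rule continuous_on_subset[OF h(1)]) auto
  ultimately show ?thesis
    using Henstock_Kurzweil_Integration.integral_combine[where f=h and a=0 and c=a and b=b] ab
    by auto
qed

section \<open>The function Psi\<close>

lemma Psi_integrand_continuous:
  fixes w :: "real \<Rightarrow> real" and m n :: real
  assumes w: "continuous_on {0..} w" "\<forall>x>0. w x > 0"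
  shows "continuous_on {0<..} (\<lambda>s. 1 / w (s powr (1/(m-n))))"
proof -
  have "continuous_on {0<..} (\<lambda>s::real. s powr (1/(m-n)))"
    by (intro continuous_intros) auto
  then have "continuous_on {0<..} (\<lambda>s. w (s powr (1/(m-n))))"
    by (rule continuous_on_compose2[OF w(1)]) auto
  moreover have "\<forall>s>0. w (s powr (1/(m-n))) > 0"
    using w(2) by simp
  ultimately show ?thesis
    by (intro continuous_intros) auto
qed

text \<open>Psi is differentiable on the positive reals with derivative 1/w(x^(1/(m-n))):
  near x it differs from an indefinite integral by a constant.\<close>
lemma Psi_has_derivative:
  fixes w :: "real \<Rightarrow> real" and m n x :: real
  assumes w: "continuous_on {0..} w" "\<forall>x>0. w x > 0" and x: "x > 0"
  shows "(Psi w m n has_real_derivative 1 / w (x powr (1/(m-n)))) (at x)"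
proof -
  define k where "k = (\<lambda>s. 1 / w (s powr (1/(m-n))))"
  have k: "continuous_on {0<..} k"
    unfolding k_def by (rule Psi_integrand_continuous[OF w])
  define a where "a = min x 1 / 2"
  define b where "b = max x 1 + 1"
  have a: "0 < a" "a < x" "a < 1" and b: "x < b" "1 < b"
    using x by (auto simp: a_def b_def)
  have int: "k integrable_on {a..y}" for y
    by (rule integrable_continuous_real, rule continuous_on_subset[OF k]) (use a in auto)
  have Psi_eq: "Psi w m n y = integral {a..y} k - integral {a..1} k" if "y \<in> {a<..<b}" for y
  proof (cases "1 \<le> y")
    case True
    then show ?thesis
      using Henstock_Kurzweil_Integration.integral_combine[where f=k and a=a and c=1 and b=y]
        int[of y] a
      unfolding Psi_def oint_def k_def by auto
  next
    case False
    then show ?thesis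
      using Henstock_Kurzweil_Integration.integral_combine[where f=k and a=a and c=y and b=1]
        int[of 1] a that
      unfolding Psi_def oint_def k_def by auto
  qed
  have "((\<lambda>y. integral {a..y} k) has_real_derivative k x) (at x)"
    using integral_upper_has_derivative[OF continuous_on_subset[OF k], of a b x] a b
    by (simp add: subset_eq)
  then have "((\<lambda>y. integral {a..y} k - integral {a..1} k) has_real_derivative k x) (at x)"
    by (auto intro!: derivative_eq_intros)
  then show ?thesis
    using has_field_derivative_transform_within_open[where S="{a<..<b}"] Psi_eq a b
    unfolding k_def by auto
qed

lemma Psi_continuous_on:
  fixes w :: "real \<Rightarrow> real" and m n :: real
  assumes w: "continuous_on {0..} w" "\<forall>x>0. w x > 0"
  shows "continuous_on {0<..} (Psi w m n)"
  by (rule continuous_at_imp_continuous_on)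
    (use Psi_has_derivative[OF w, where m=m and n=n] DERIV_isCont in auto)

lemma Psi_less:
  fixes w :: "real \<Rightarrow> real" and m n x y :: real
  assumes w: "continuous_on {0..} w" "\<forall>x>0. w x > 0" and xy: "0 < x" "x < y"
  shows "Psi w m n x < Psi w m n y"
proof (rule DERIV_pos_imp_increasing[OF xy(2)])
  fix z assume "x \<le> z" "z \<le> y"
  then have z: "z > 0" using xy by auto
  then show "\<exists>y. DERIV (Psi w m n) z :> y \<and> y > 0"
    using Psi_has_derivative[OF w z, where m=m and n=n] w(2) by auto
qed

lemma Psi_le_iff:
  fixes w :: "real \<Rightarrow> real" and m n x y :: real
  assumes w: "continuous_on {0..} w" "\<forall>x>0. w x > 0" and xy: "0 < x" "0 < y"
  shows "Psi w m n x \<le> Psi w m n y \<longleftrightarrow> x \<le> y"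
  using Psi_less[OF w xy(1), where m=m and n=n and y=y]
    Psi_less[OF w xy(2), where m=m and n=n and y=x]
  by (smt (verit))

lemma Psi_dom_between:
  fixes w :: "real \<Rightarrow> real" and m n a b y :: real
  assumes w: "continuous_on {0..} w" "\<forall>x>0. w x > 0"
    and ab: "0 < a" "a \<le> b" and y: "Psi w m n a \<le> y" "y \<le> Psi w m n b"
  shows "y \<in> Psi_dom w m n"
proof -
  have "\<forall>x. a \<le> x \<and> x \<le> b \<longrightarrow> isCont (Psi w m n) x"
    using Psi_has_derivative[OF w, where m=m and n=n] DERIV_isCont ab
    by (metis order_less_le_trans)
  then obtain x where "a \<le> x" "Psi w m n x = y"
    using IVT[OF y ab(2)] by blast
  then show ?thesis
    unfolding Psi_dom_def using ab by force
qed

lemma le_Psi_inv: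
  fixes w :: "real \<Rightarrow> real" and m n p y :: real
  assumes w: "continuous_on {0..} w" "\<forall>x>0. w x > 0"
    and y: "y \<in> Psi_dom w m n" and p: "0 < p" "Psi w m n p \<le> y"
  shows "p \<le> Psi_inv w m n y"
proof -
  obtain x where x: "0 < x" "y = Psi w m n x"
    using y unfolding Psi_dom_def by auto
  have "Psi_inv w m n y = x"
    unfolding Psi_inv_def x(2)
  proof (rule the_equality)
    fix z assume "0 < z \<and> Psi w m n z = Psi w m n x"
    then show "z = x"
      using Psi_le_iff[OF w, where m=m and n=n] x by (metis order_antisym order_refl)
  qed (use x in simp)
  then show ?thesis
    using Psi_le_iff[OF w p(1) x(1), where m=m and n=n] p x by simp
qed

section \<open>The two comparison steps\<close>

lemma power_reduction:
  fixes v d k :: "real \<Rightarrow> real" and m n T :: real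
  assumes mn: "0 < m" "n < m" and T: "0 \<le> T"
    and v: "continuous_on {0..T} v" "\<forall>x\<in>{0..T}. v x > 0"
    and v': "\<forall>x\<in>{0<..<T}. (v has_real_derivative d x) (at x)"
    and d: "\<forall>x\<in>{0<..<T}. d x \<le> m/(m-n) * v x powr (n/m) * k x"
    and k: "continuous_on {0..T} k"
  shows "v T powr ((m-n)/m) \<le> v 0 powr ((m-n)/m) + integral {0..T} k"
proof -
  define q where "q = (m-n)/m"
  define \<phi> where "\<phi> x = v x powr q - integral {0..x} k" for x
  have "\<phi> T \<le> \<phi> 0"
  proof (rule DERIV_nonpos_imp_decreasing_open[OF T])
    show "continuous_on {0..T} \<phi>"
      unfolding \<phi>_def using v k
      by (intro continuous_intros indefinite_integral_continuous_1 integrable_continuous_real)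
        auto
    fix x assume x: "0 < x" "x < T"
    have vx: "v x > 0" using v(2) x by auto
    have v'x: "(v has_real_derivative d x) (at x)" using v' x by auto
    have "DERIV \<phi> x :> q * v x powr (q - 1) * d x - k x"
      unfolding \<phi>_def
      using DERIV_chain2[OF has_real_derivative_powr[OF vx, of q] v'x]
        integral_upper_has_derivative[OF k x] vx v'x
      by (auto intro!: derivative_eq_intros)
    moreover have "q * v x powr (q - 1) * d x \<le> k x"
    proof -
      have exps: "q - 1 + n/m = 0" "q * (m/(m-n)) = 1"
        using mn by (simp_all add: q_def field_simps)
      have "q * v x powr (q - 1) * d x \<le> q * v x powr (q - 1) * (m/(m-n) * v x powr (n/m) * k x)"
        using d x mn by (intro mult_left_mono) (auto simp: q_def)
      also have "\<dots> = (q * (m/(m-n))) * (v x powr (q - 1) * v x powr (n/m)) * k x"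
        by (simp add: ac_simps)
      also have "\<dots> = k x"
      proof -
        have "v x powr (q - 1) * v x powr (n/m) = 1"
          using exps(1) vx by (simp add: powr_add[symmetric])
        then show ?thesis by (simp only: exps(2) mult_1)
      qed
      finally show ?thesis .
    qed
    ultimately show "\<exists>y. DERIV \<phi> x :> y \<and> y \<le> 0" by force
  qed
  then show ?thesis by (simp add: \<phi>_def q_def)
qed

lemma Psi_comparison:
  fixes w R r f :: "real \<Rightarrow> real" and m n T :: real
  assumes w: "continuous_on {0..} w" "\<forall>x>0. w x > 0" and T: "0 \<le> T"
    and R: "continuous_on {0..T} R" "\<forall>x\<in>{0..T}. R x > 0"
    and R': "\<forall>x\<in>{0<..<T}. (R has_real_derivative r x) (at x)"
    and r: "\<forall>x\<in>{0<..<T}. r x \<le> f x * w (R x powr (1/(m-n)))"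
    and f: "continuous_on {0..T} f"
  shows "Psi w m n (R T) \<le> Psi w m n (R 0) + integral {0..T} f"
proof -
  define \<psi> where "\<psi> x = Psi w m n (R x) - integral {0..x} f" for x
  have "\<psi> T \<le> \<psi> 0"
  proof (rule DERIV_nonpos_imp_decreasing_open[OF T])
    have "continuous_on {0..T} (\<lambda>x. Psi w m n (R x))"
      by (rule continuous_on_compose2[OF Psi_continuous_on[OF w] R(1)]) (use R(2) in auto)
    then show "continuous_on {0..T} \<psi>"
      unfolding \<psi>_def using f
      by (intro continuous_intros indefinite_integral_continuous_1 integrable_continuous_real)
    fix x assume x: "0 < x" "x < T"
    have Rx: "R x > 0" using R(2) x by auto
    have wR: "w (R x powr (1/(m-n))) > 0" using w(2) Rx by auto
    have R'x: "(R has_real_derivative r x) (at x)" using R' x by auto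
    have "DERIV \<psi> x :> 1 / w (R x powr (1/(m-n))) * r x - f x"
      unfolding \<psi>_def
      using DERIV_chain2[OF Psi_has_derivative[OF w Rx] R'x] integral_upper_has_derivative[OF f x]
      by (auto intro!: derivative_eq_intros)
    moreover have "1 / w (R x powr (1/(m-n))) * r x \<le> f x"
      using r x wR by (simp add: divide_le_eq mult.commute)
    ultimately show "\<exists>y. DERIV \<psi> x :> y \<and> y \<le> 0" by force
  qed
  then show ?thesis by (simp add: \<psi>_def)
qed

lemma le_root_powr:
  fixes m u V :: real
  assumes "0 < m" "0 \<le> u" "u powr m \<le> V"
  shows "u \<le> V powr (1/m)"
proof -
  have "u = (u powr m) powr (1/m)"
    using assms by (simp add: powr_powr)
  also have "\<dots> \<le> V powr (1/m)"
    using assms by (intro powr_mono2) auto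
  finally show ?thesis .
qed

lemma integrand_bound:
  fixes w :: "real \<Rightarrow> real" and m n f g u V :: real
  assumes mn: "0 < n" "n < m" and w: "\<forall>t\<ge>0. w t \<ge> 0" "mono_on {0..} w"
    and fg: "f \<ge> 0" "g \<ge> 0" and u: "u \<ge> 0" "u powr m \<le> V"
  shows "f * u powr n * w u + g * u powr n \<le> V powr (n/m) * (f * w (V powr (1/m)) + g)"
proof -
  have u_le: "u \<le> V powr (1/m)"
    using le_root_powr[OF _ u] mn by simp
  have "u powr n \<le> (V powr (1/m)) powr n"
    using u_le u(1) mn by (intro powr_mono2) auto
  then have un: "u powr n \<le> V powr (n/m)"
    by (simp add: powr_powr)
  have wu: "w u \<le> w (V powr (1/m))"
    using u_le u(1) w(2) by (auto intro: mono_onD)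
  have "f * u powr n * w u \<le> f * V powr (n/m) * w (V powr (1/m))"
    using fg un wu w(1) u(1) by (intro mult_mono mult_left_mono) auto
  moreover have "g * u powr n \<le> g * V powr (n/m)"
    using fg un by (intro mult_left_mono) auto
  ultimately show ?thesis by (simp add: algebra_simps)
qed

section \<open>The majorant of u^m\<close>

definition majorant :: "real \<Rightarrow> real \<Rightarrow> real \<Rightarrow> (real \<Rightarrow> real) \<Rightarrow> real \<Rightarrow> real" where
  "majorant m n c h s = c powr (m/(m-n)) + m/(m-n) * integral {0..s} h"

lemma majorant_pos:
  fixes h :: "real \<Rightarrow> real" and m n c s :: real
  assumes mn: "0 < n" "n < m" and c: "c > 0"
    and h: "continuous_on {0..} h" "\<forall>s\<ge>0. h s \<ge> 0" and s: "s \<ge> 0"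
  shows "majorant m n c h s > 0"
proof -
  have "0 \<le> integral {0..s} h"
    using h(2) by (intro integral_nonneg_continuous continuous_on_subset[OF h(1)]) auto
  then show ?thesis
    using c mn by (simp add: majorant_def add_pos_nonneg)
qed

lemma majorant_mono:
  fixes h :: "real \<Rightarrow> real" and m n c a b :: real
  assumes mn: "0 < n" "n < m" and h: "continuous_on {0..} h" "\<forall>s\<ge>0. h s \<ge> 0"
    and ab: "0 \<le> a" "a \<le> b"
  shows "majorant m n c h a \<le> majorant m n c h b"
  unfolding majorant_def using integral_upper_mono[OF h ab] mn
  by (intro add_left_mono mult_left_mono) auto

lemma majorant_continuous_on:
  fixes h :: "real \<Rightarrow> real" and m n c T :: real
  assumes h: "continuous_on {0..} h"
  shows "continuous_on {0..T} (majorant m n c h)"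
  unfolding majorant_def using continuous_on_subset[OF h]
  by (intro continuous_intros indefinite_integral_continuous_1 integrable_continuous_real) auto

lemma majorant_has_derivative:
  fixes h :: "real \<Rightarrow> real" and m n c x :: real
  assumes mn: "n < m" and h: "continuous_on {0..} h" and x: "x > 0"
  shows "(majorant m n c h has_real_derivative m/(m-n) * h x) (at x)"
  unfolding majorant_def
  using integral_upper_has_derivative[OF continuous_on_subset[OF h], of 0 "x+1" x] x mn
  by (auto intro!: derivative_eq_intros)

lemma majorant_weight_continuous_on:
  fixes f w h :: "real \<Rightarrow> real" and m n c T :: real
  assumes mn: "0 < n" "n < m" and c: "c > 0" and f: "continuous_on {0..} f"
    and w: "continuous_on {0..} w" and h: "continuous_on {0..} h" "\<forall>s\<ge>0. h s \<ge> 0"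
  shows "continuous_on {0..T} (\<lambda>s. f s * w (majorant m n c h s powr (1/m)))"
proof -
  have "\<forall>s\<in>{0..T}. majorant m n c h s \<noteq> 0"
    using majorant_pos[OF mn c h] by (metis atLeastAtMost_iff less_irrefl)
  then have "continuous_on {0..T} (\<lambda>s. majorant m n c h s powr (1/m))"
    by (intro continuous_on_powr majorant_continuous_on[OF h(1)] continuous_on_const)
  then have "continuous_on {0..T} (\<lambda>s. w (majorant m n c h s powr (1/m)))"
    by (rule continuous_on_compose2[OF w]) auto
  then show ?thesis
    using continuous_on_subset[OF f] by (intro continuous_on_mult) auto
qed

lemma majorant_power_bound:
  fixes h k :: "real \<Rightarrow> real" and m n c T :: real
  assumes mn: "0 < n" "n < m" and c: "c > 0" and T: "0 \<le> T"
    and h: "continuous_on {0..} h" "\<forall>s\<ge>0. h s \<ge> 0"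
    and h_le: "\<forall>s\<in>{0<..<T}. h s \<le> majorant m n c h s powr (n/m) * k s"
    and k: "continuous_on {0..T} k"
  shows "majorant m n c h T powr ((m-n)/m) \<le> c + integral {0..T} k"
proof -
  have "majorant m n c h T powr ((m-n)/m) \<le>
          majorant m n c h 0 powr ((m-n)/m) + integral {0..T} k"
  proof (rule power_reduction[OF _ mn(2) T majorant_continuous_on[OF h(1)] _ _ _ k])
    show "\<forall>x\<in>{0..T}. majorant m n c h x > 0"
      using majorant_pos[OF mn c h] by auto
    show "\<forall>x\<in>{0<..<T}. (majorant m n c h has_real_derivative m/(m-n) * h x) (at x)"
      using majorant_has_derivative[OF mn(2) h(1)] by auto
    show "\<forall>x\<in>{0<..<T}. m/(m-n) * h x \<le> m/(m-n) * majorant m n c h x powr (n/m) * k x"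
    proof
      fix x assume "x \<in> {0<..<T}"
      then have "h x \<le> majorant m n c h x powr (n/m) * k x" using h_le by simp
      then show "m/(m-n) * h x \<le> m/(m-n) * majorant m n c h x powr (n/m) * k x"
        unfolding mult.assoc by (rule mult_left_mono) (use mn in simp)
    qed
  qed (use mn in simp)
  moreover have "majorant m n c h 0 powr ((m-n)/m) = c"
    unfolding majorant_def using c mn by (simp add: powr_powr)
  ultimately show ?thesis by simp
qed

text \<open>The comparison function R = c + G(T) + K dominates
  v^((m-n)/m) on [0,T] by step (1), which turns the weight into f w(R^(1/(m-n))).\<close>
lemma majorant_Psi_bound:
  fixes f g w h :: "real \<Rightarrow> real" and m n c T :: real
  assumes mn: "0 < n" "n < m" and c: "c > 0"
    and f: "continuous_on {0..} f" "\<forall>t\<ge>0. f t \<ge> 0"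
    and g: "continuous_on {0..} g" "\<forall>t\<ge>0. g t \<ge> 0"
    and w: "continuous_on {0..} w" "\<forall>t\<ge>0. w t \<ge> 0" "mono_on {0..} w" "\<forall>x>0. w x > 0"
    and h: "continuous_on {0..} h" "\<forall>s\<ge>0. h s \<ge> 0"
    and h_le: "\<forall>s\<ge>0. h s \<le> majorant m n c h s powr (n/m) *
                            (f s * w (majorant m n c h s powr (1/m)) + g s)"
    and T: "0 \<le> T"
  shows "Psi w m n (majorant m n c h T powr ((m-n)/m))
           \<le> Psi w m n (c + integral {0..T} g) + integral {0..T} f"
proof -
  define v where "v = majorant m n c h"
  define F where "F s = f s * w (v s powr (1/m))" for s
  define R where "R x = c + integral {0..T} g + integral {0..x} F" for x
  have mpos: "0 < m" "0 < m - n" using mn by auto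
  have v_pos: "v x > 0" if "x \<ge> 0" for x
    unfolding v_def using majorant_pos[OF mn c h that] .
  have F_cont: "continuous_on {0..x} F" for x
    unfolding F_def v_def by (rule majorant_weight_continuous_on[OF mn c f(1) w(1) h])
  have R_pos: "R x > 0" if "0 \<le> x" for x
  proof -
    have "0 \<le> integral {0..T} g"
      using g(2) by (intro integral_nonneg_continuous continuous_on_subset[OF g(1)]) auto
    moreover have "0 \<le> integral {0..x} F"
      using f(2) w(2) by (intro integral_nonneg_continuous F_cont) (auto simp: F_def)
    ultimately show ?thesis using c by (simp add: R_def)
  qed
  have v_R: "v x powr ((m-n)/m) \<le> R x" if x: "0 \<le> x" "x \<le> T" for x
  proof -
    have "continuous_on {0..x} (\<lambda>s. F s + g s)"
      by (intro continuous_on_add F_cont continuous_on_subset[OF g(1)]) auto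
    then have "v x powr ((m-n)/m) \<le> c + integral {0..x} (\<lambda>s. F s + g s)"
      unfolding v_def using h_le
      by (intro majorant_power_bound[OF mn c x(1) h]) (auto simp: F_def v_def)
    also have "\<dots> = c + integral {0..x} F + integral {0..x} g"
      using F_cont continuous_on_subset[OF g(1)]
      by (subst integral_add) (auto intro: integrable_continuous_real)
    also have "\<dots> \<le> R x"
      using integral_upper_mono[OF g x] by (simp add: R_def)
    finally show ?thesis .
  qed
  have "Psi w m n (R T) \<le> Psi w m n (R 0) + integral {0..T} f"
  proof (rule Psi_comparison[OF w(1,4) T])
    show "continuous_on {0..T} R"
      unfolding R_def
      by (intro continuous_on_add continuous_on_const indefinite_integral_continuous_1
          integrable_continuous_real F_cont)
    show "\<forall>x\<in>{0<..<T}. (R has_real_derivative F x) (at x)"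
      unfolding R_def using integral_upper_has_derivative[OF F_cont]
      by (auto intro!: derivative_eq_intros)
    show "\<forall>x\<in>{0<..<T}. F x \<le> f x * w (R x powr (1/(m-n)))"
    proof
      fix x assume x: "x \<in> {0<..<T}"
      have "v x powr (1/m) = (v x powr ((m-n)/m)) powr (1/(m-n))"
        using mpos by (simp add: powr_powr)
      also have "\<dots> \<le> R x powr (1/(m-n))"
        using v_R[of x] x mpos by (intro powr_mono2) auto
      finally have "w (v x powr (1/m)) \<le> w (R x powr (1/(m-n)))"
        using R_pos[of x] x by (intro mono_onD[OF w(3)]) auto
      then show "F x \<le> f x * w (R x powr (1/(m-n)))"
        unfolding F_def using f(2) x by (intro mult_left_mono) auto
    qed
  qed (use R_pos continuous_on_subset[OF f(1)] in auto)
  moreover have "Psi w m n (v T powr ((m-n)/m)) \<le> Psi w m n (R T)"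
    using Psi_le_iff[OF w(1,4) _ R_pos[OF T], of "v T powr ((m-n)/m)" m n] v_R[OF T order.refl]
      v_pos[OF T]
    by simp
  ultimately show ?thesis
    by (simp add: R_def v_def)
qed

theorem bihari_bound:
  fixes m n c :: real and f g w \<alpha> u :: "real \<Rightarrow> real"
  assumes mn: "0 < n" "n < m" and c: "c > 0"
    and f: "continuous_on {0..} f" "\<forall>t\<ge>0. f t \<ge> 0"
    and g: "continuous_on {0..} g" "\<forall>t\<ge>0. g t \<ge> 0"
    and w: "continuous_on {0..} w" "\<forall>t\<ge>0. w t \<ge> 0" "mono_on {0..} w" "\<forall>x>0. w x > 0"
    and \<alpha>: "\<forall>t\<ge>0. \<alpha> t \<ge> 0" "\<forall>t\<ge>0. \<alpha> t \<le> t"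
    and u: "continuous_on {0..} u" "\<forall>t\<ge>0. u t \<ge> 0"
    and ineq: "\<forall>t\<ge>0. u t powr m \<le> c powr (m / (m - n)) + m / (m - n) *
                 integral {0..\<alpha> t} (\<lambda>s. f s * u s powr n * w (u s) + g s * u s powr n)"
    and t: "t \<ge> 0"
  shows "\<exists>p>0. Psi w m n p \<le> Psi w m n (c + integral {0..\<alpha> t} g) + integral {0..\<alpha> t} f \<and>
               u t \<le> p powr (1 / (m - n))"
proof -
  define h where "h s = f s * u s powr n * w (u s) + g s * u s powr n" for s
  define v where "v = majorant m n c h"
  have wu_cont: "continuous_on {0..} (\<lambda>s. w (u s))"
    by (rule continuous_on_compose2[OF w(1) u(1)]) (use u(2) in auto)
  have un_cont: "continuous_on {0..} (\<lambda>s. u s powr n)"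
    by (rule continuous_on_powr') (use u mn in \<open>auto intro: continuous_intros\<close>)
  have h_cont: "continuous_on {0..} h"
    unfolding h_def by (intro continuous_on_add continuous_on_mult f(1) g(1) wu_cont un_cont)
  have h_nonneg: "\<forall>s\<ge>0. h s \<ge> 0"
    unfolding h_def using f(2) g(2) w(2) u(2) by auto
  have u_v_delay: "u s powr m \<le> v (\<alpha> s)" if "s \<ge> 0" for s
    using ineq that unfolding v_def majorant_def h_def by auto
  have u_v: "u s powr m \<le> v s" if "s \<ge> 0" for s
    using u_v_delay[OF that] majorant_mono[OF mn h_cont h_nonneg] \<alpha> that
    unfolding v_def by (meson order_trans)
  have h_le: "h s \<le> v s powr (n/m) * (f s * w (v s powr (1/m)) + g s)" if "s \<ge> 0" for s
    unfolding h_def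
    using integrand_bound[OF mn w(2,3) f(2)[rule_format, OF that] g(2)[rule_format, OF that]
        u(2)[rule_format, OF that] u_v[OF that]] .
  have \<alpha>t: "0 \<le> \<alpha> t" using \<alpha>(1) t by simp
  define p where "p = v (\<alpha> t) powr ((m-n)/m)"
  have "\<forall>s\<ge>0. h s \<le> v s powr (n/m) * (f s * w (v s powr (1/m)) + g s)"
    using h_le by blast
  then have "Psi w m n p \<le> Psi w m n (c + integral {0..\<alpha> t} g) + integral {0..\<alpha> t} f"
    unfolding p_def v_def by (rule majorant_Psi_bound[OF mn c f g w h_cont h_nonneg _ \<alpha>t])
  moreover have "p > 0"
    using majorant_pos[OF mn c h_cont h_nonneg \<alpha>t] by (simp add: p_def v_def)
  moreover have "u t \<le> p powr (1/(m-n))"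
  proof -
    have "u t \<le> v (\<alpha> t) powr (1/m)"
      using le_root_powr[OF _ _ u_v_delay[OF t]] u(2) t mn by simp
    also have "\<dots> = p powr (1/(m-n))"
      unfolding p_def using mn by (simp add: powr_powr)
    finally show ?thesis .
  qed
  ultimately show ?thesis by blast
qed

section \<open>Smallness of the bound near the origin\<close>

lemma continuous_on_stays_below:
  fixes H :: "real \<Rightarrow> real" and b B :: real
  assumes H: "continuous_on {0..b} H" and b: "0 < b" and B: "H 0 < B"
  shows "\<exists>\<tau>>0. \<forall>x\<in>{0..\<tau>}. H x \<le> B"
proof -
  have "0 \<in> {0..b}" "B - H 0 > 0" using b B by auto
  then obtain d where d: "d > 0" "\<forall>x\<in>{0..b}. dist x 0 < d \<longrightarrow> dist (H x) (H 0) < B - H 0"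
    using H unfolding continuous_on_iff by blast
  show ?thesis
  proof (intro exI conjI ballI)
    show "0 < min (d/2) b" using d b by simp
    fix x assume "x \<in> {0..min (d/2) b}"
    then have "dist (H x) (H 0) < B - H 0"
      using d by (simp add: dist_real_def)
    then show "H x \<le> B" by (simp add: dist_real_def)
  qed
qed

lemma Psi_bound_continuous_on:
  fixes w f g :: "real \<Rightarrow> real" and m n c T :: real
  assumes w: "continuous_on {0..} w" "\<forall>x>0. w x > 0" and c: "c > 0"
    and f: "continuous_on {0..} f" and g: "continuous_on {0..} g" "\<forall>t\<ge>0. g t \<ge> 0"
  shows "continuous_on {0..T}
           (\<lambda>x. Psi w m n (c + integral {0..x} g) + integral {0..x} f)"
proof -
  have G: "continuous_on {0..T} (\<lambda>x. c + integral {0..x} g)"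
    using continuous_on_subset[OF g(1)]
    by (intro continuous_intros indefinite_integral_continuous_1 integrable_continuous_real) auto
  have "c + integral {0..x} g > 0" if "x \<in> {0..T}" for x
    using integral_nonneg_continuous[OF continuous_on_subset[OF g(1)], of 0 x] g(2) c that
    by auto
  then have "continuous_on {0..T} (\<lambda>x. Psi w m n (c + integral {0..x} g))"
    by (intro continuous_on_compose2[OF Psi_continuous_on[OF w] G]) auto
  then show ?thesis
    using continuous_on_subset[OF f]
    by (intro continuous_intros indefinite_integral_continuous_1 integrable_continuous_real) auto
qed

theorem corollary1:
  fixes m n c :: real and f g w \<alpha> u :: "real \<Rightarrow> real"
  assumes mn: "m > n" "n > 0" and c: "c > 0"
    and f: "continuous_on {0..} f" "\<forall>t\<ge>0. f t \<ge> 0"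
    and g: "continuous_on {0..} g" "\<forall>t\<ge>0. g t \<ge> 0"
    and w: "continuous_on {0..} w" "\<forall>t\<ge>0. w t \<ge> 0" "mono_on {0..} w"
           "\<forall>x>0. w x > 0"
    and \<alpha>: "\<exists>\<alpha>'. continuous_on {0..} \<alpha>' \<and>
              (\<forall>t\<ge>0. (\<alpha> has_real_derivative \<alpha>' t) (at t within {0..}))"
           "\<forall>t\<ge>0. \<alpha> t \<ge> 0" "mono_on {0..} \<alpha>" "\<forall>t\<ge>0. \<alpha> t \<le> t"
    and u: "continuous_on {0..} u" "\<forall>t\<ge>0. u t \<ge> 0"
    and ineq: "\<forall>t\<ge>0. u t powr m \<le> c powr (m / (m - n)) + m / (m - n) *
                 integral {0..\<alpha> t} (\<lambda>s. f s * u s powr n * w (u s) + g s * u s powr n)"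
  shows "\<exists>\<tau>>0. \<forall>t\<in>{0..\<tau>}.
           Psi w m n (c + integral {0..\<alpha> t} g) + integral {0..\<alpha> t} f \<in> Psi_dom w m n \<and>
           u t \<le> (Psi_inv w m n (Psi w m n (c + integral {0..\<alpha> t} g) + integral {0..\<alpha> t} f))
                   powr (1 / (m - n))"
proof -
  define H where "H x = Psi w m n (c + integral {0..x} g) + integral {0..x} f" for x
  have "H 0 < Psi w m n (2 * c)"
    using Psi_less[OF w(1,4), of c "2 * c"] c by (simp add: H_def)
  then obtain \<tau> where \<tau>: "\<tau> > 0" "\<forall>x\<in>{0..\<tau>}. H x \<le> Psi w m n (2 * c)"
    using continuous_on_stays_below[of 1 H] Psi_bound_continuous_on[OF w(1,4) c f(1) g]
    unfolding H_def by force
  have H_lower: "Psi w m n c \<le> H x" if "x \<ge> 0" for x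
    using Psi_le_iff[OF w(1,4) c, of "c + integral {0..x} g" m n] c that
      integral_nonneg_continuous[OF continuous_on_subset[OF f(1)], of 0 x] f(2)
      integral_nonneg_continuous[OF continuous_on_subset[OF g(1)], of 0 x] g(2)
    unfolding H_def by auto
  have "H (\<alpha> t) \<in> Psi_dom w m n \<and> u t \<le> Psi_inv w m n (H (\<alpha> t)) powr (1 / (m - n))"
    if t: "t \<in> {0..\<tau>}" for t
  proof -
    have \<alpha>t: "0 \<le> \<alpha> t" "\<alpha> t \<le> \<tau>" using \<alpha>(2,4) t by force+
    obtain p where p: "p > 0" "Psi w m n p \<le> H (\<alpha> t)" "u t \<le> p powr (1 / (m - n))"
      using bihari_bound[OF mn(2,1) c f g w \<alpha>(2,4) u ineq] t unfolding H_def by auto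
    have dom: "H (\<alpha> t) \<in> Psi_dom w m n"
      using Psi_dom_between[OF w(1,4) c, of "2 * c"] H_lower[OF \<alpha>t(1)] \<tau>(2) \<alpha>t c by auto
    have "p powr (1 / (m - n)) \<le> Psi_inv w m n (H (\<alpha> t)) powr (1 / (m - n))"
      using le_Psi_inv[OF w(1,4) dom p(1,2)] p(1) mn by (intro powr_mono2) auto
    then show ?thesis using dom p(3) by linarith
  qed
  then show ?thesis using \<tau>(1) unfolding H_def by blast
qed

end
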